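(* Let $f(x)=\mathbb{E}_\xi f_\xi(x)$ where $f_\xi:\mathbb{R}^d\to\mathbb{R}$ is almost surely convex and $L$-smooth, let $x^*$ be the fixed optimum of the composite problem, and assume $\sigma_*^2:=\mathbb{E}_\xi\|\nabla f_\xi(x^* )-\nabla f(x^* )\|^2<+\infty$. Consider SGD, $v^t=\nabla f_{\xi^t}(x^t)$, where $\xi^t$ is a copy of $\xi$ independent of $x^t$ and of the past, run for at most $t_0$ iterations. Then it satisfies part (a) of the gradient-estimator condition with $\eta_0=\frac1{4L}$, $\omega=1$ and $\mathcal M^t=2\eta^2(t_0-t)\sigma_*^2$ for $t=0,\dots,t_0$. If $f$ is strongly convex and $\sigma_*=0$, it satisfies part (b) with $\eta_0=\frac1{2L}$, $\omega=1$ and $\mathcal M^t=0$.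
   Context: $L$-smoothness: $h(x)\le h(y)+\langle\nabla h(y),x-y\rangle+\frac L2\|x-y\|^2$; $\mu$-strong convexity: $f(x)\ge f(y)+\langle\nabla f(y),x-y\rangle+\frac\mu2\|x-y\|^2$. Bregman divergence $D_f(x,y):=f(x)-f(y)-\langle\nabla f(y),x-y\rangle$. Gradient-estimator condition: with $w^t:=x^t-\eta v^t$, $w^*:=x^*-\eta\nabla f(x^* )$, there are $\eta_0>0$, $\omega>0$ and a nonnegative sequence $\{\mathcal M^t\}$ such that for any $\eta\le\eta_0$ and each $t$: (a) if $f$ is convex, $\mathbb{E}\|w^t-w^*\|^2+\mathcal M^{t+1}\le\mathbb{E}\|x^t-x^*\|^2-\omega\eta\mathbb{E}D_f(x^t,x^* )+\mathcal M^t$; (b) if $f$ is $\mu$-strongly convex, either $\mathcal M^t\equiv0$ or for some $\rho>0$, $\mathbb{E}\|w^t-w^*\|^2+\mathcal M^{t+1}\le(1-\omega\eta\mu)\mathbb{E}\|x^t-x^*\|^2+(1-\rho)\mathcal M^t$. In case (b) with $\mathcal M^t\equiv0$ this reads $\mathbb{E}\|w^t-w^*\|^2\le(1-\omega\eta\mu)\mathbb{E}\|x^t-x^*\|^2$. *)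

theory Defs
  imports "HOL-Probability.Probability"
begin

definition grad :: "('a::euclidean_space \<Rightarrow> real) \<Rightarrow> 'a \<Rightarrow> 'a" where
  "grad h x = (SOME g. (h has_derivative (\<lambda>v. inner g v)) (at x))"

definition L_smooth :: "real \<Rightarrow> ('a::euclidean_space \<Rightarrow> real) \<Rightarrow> bool" where
  "L_smooth L h \<longleftrightarrow> (\<forall>x. h differentiable (at x)) \<and>
     (\<forall>x y. h x \<le> h y + inner (grad h y) (x - y) + L / 2 * (norm (x - y))\<^sup>2)"

definition strongly_convex :: "real \<Rightarrow> ('a::euclidean_space \<Rightarrow> real) \<Rightarrow> bool" where
  "strongly_convex \<mu> h \<longleftrightarrow> \<mu> > 0 \<and> (\<forall>x. h differentiable (at x)) \<and>
     (\<forall>x y. h x \<ge> h y + inner (grad h y) (x - y) + \<mu> / 2 * (norm (x - y))\<^sup>2)"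

definition bregman :: "('a::euclidean_space \<Rightarrow> real) \<Rightarrow> 'a \<Rightarrow> 'a \<Rightarrow> real" where
  "bregman h x y = h x - h y - inner (grad h y) (x - y)"

end

theory Submission
  imports Defs
begin

text \<open>For a single convex \<open>L\<close>-smooth sample \<open>h\<close>, expand the square
  \<open>\<parallel>(x - \<eta> \<nabla>h(x)) - (x\<^sup>* - \<eta> \<nabla>f(x\<^sup>*))\<parallel>\<^sup>2\<close>, split \<open>\<langle>\<nabla>h(x) - \<nabla>h(x\<^sup>*), x - x\<^sup>*\<rangle>\<close> into the
  two Bregman divergences \<open>D\<^sub>h(x, x\<^sup>*) + D\<^sub>h(x\<^sup>*, x)\<close> and bound \<open>\<parallel>\<nabla>h(x) - \<nabla>h(x\<^sup>*)\<parallel>\<^sup>2\<close> by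
  co-coercivity, \<open>2 L D\<^sub>h(x, x\<^sup>*)\<close>. Since \<open>\<xi>\<^sup>t\<close> is independent of \<open>x\<^sup>t\<close>, the expectation can be
  taken over \<open>\<xi>\<close> first with \<open>x\<^sup>t\<close> frozen; as \<open>\<nabla>f = \<bbbE> \<nabla>f\<^sub>\<xi>\<close>, this turns \<open>D\<^sub>h\<close> into \<open>D\<^sub>f\<close>,
  kills the cross term and leaves \<open>2 \<eta>\<^sup>2 \<sigma>\<^sub>*\<^sup>2\<close>, giving
  \<open>\<parallel>x - x\<^sup>*\<parallel>\<^sup>2 - 2\<eta>(1 - 2L\<eta>) D\<^sub>f(x, x\<^sup>*) - 2\<eta> D\<^sub>f(x\<^sup>*, x) + 2\<eta>\<^sup>2\<sigma>\<^sub>*\<^sup>2\<close>.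
  For \<open>\<eta> \<le> 1/(4L)\<close> drop the last divergence to get (a); for \<open>\<sigma>\<^sub>* = 0\<close> and \<open>\<eta> \<le> 1/(2L)\<close> drop
  the first one and use \<open>D\<^sub>f(x\<^sup>*, x) \<ge> \<mu>/2 \<parallel>x - x\<^sup>*\<parallel>\<^sup>2\<close> to get (b).\<close>

lemma linear_eq_inner:
  fixes D :: "'a::euclidean_space \<Rightarrow> real"
  assumes "linear D"
  shows "D = (\<lambda>v. inner (\<Sum>b\<in>Basis. D b *\<^sub>R b) v)"
proof
  fix v
  have "D v = D (\<Sum>b\<in>Basis. (v \<bullet> b) *\<^sub>R b)" by (simp add: euclidean_representation)
  also have "\<dots> = (\<Sum>b\<in>Basis. (v \<bullet> b) * D b)"
    using assms by (simp add: linear_sum linear_scale)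
  also have "\<dots> = inner (\<Sum>b\<in>Basis. D b *\<^sub>R b) v"
    by (simp add: inner_sum_right inner_commute mult.commute)
  finally show "D v = inner (\<Sum>b\<in>Basis. D b *\<^sub>R b) v" .
qed

lemma has_derivative_grad:
  fixes h :: "'a::euclidean_space \<Rightarrow> real"
  assumes "h differentiable (at x)"
  shows "(h has_derivative (\<lambda>v. inner (grad h x) v)) (at x)"
proof -
  obtain D where D: "(h has_derivative D) (at x)"
    using assms unfolding differentiable_def by blast
  then have "D = (\<lambda>v. inner (\<Sum>b\<in>Basis. D b *\<^sub>R b) v)"
    by (intro linear_eq_inner has_derivative_linear)
  with D have "\<exists>g. (h has_derivative (\<lambda>v. inner g v)) (at x)" by metis
  then show ?thesis unfolding grad_def by (rule someI_ex)
qed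

lemma grad_eqI:
  fixes h :: "'a::euclidean_space \<Rightarrow> real"
  assumes "(h has_derivative (\<lambda>v. inner g v)) (at x)"
  shows "grad h x = g"
proof -
  have "h differentiable (at x)" using assms unfolding differentiable_def by blast
  from has_derivative_unique[OF has_derivative_grad[OF this] assms]
  have "inner (grad h x - g) (grad h x - g) = 0"
    by (metis inner_diff_left diff_self)
  then show ?thesis by simp
qed

lemma bregman_nonneg:
  fixes h :: "'a::euclidean_space \<Rightarrow> real"
  assumes cvx: "convex_on UNIV h" and diff: "h differentiable (at y)"
  shows "0 \<le> bregman h x y"
proof -
  define \<phi> where "\<phi> t = h (y + t *\<^sub>R (x - y))" for t :: real
  have "convex_on UNIV \<phi>"
  proof (rule convex_onI)
    fix t a b :: real assume "0 < t" "t < 1"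
    have "y + ((1 - t) *\<^sub>R a + t *\<^sub>R b) *\<^sub>R (x - y)
        = (1 - t) *\<^sub>R (y + a *\<^sub>R (x - y)) + t *\<^sub>R (y + b *\<^sub>R (x - y))"
      by (simp add: algebra_simps)
    then show "\<phi> ((1 - t) *\<^sub>R a + t *\<^sub>R b) \<le> (1 - t) * \<phi> a + t * \<phi> b"
      unfolding \<phi>_def using convex_onD[OF cvx, of t] \<open>0 < t\<close> \<open>t < 1\<close> by simp
  qed simp
  have "(h has_derivative (\<lambda>v. inner (grad h y) v)) (at (y + 0 *\<^sub>R (x - y)))"
    using has_derivative_grad[OF diff] by simp
  moreover have "((\<lambda>t. y + t *\<^sub>R (x - y)) has_derivative (\<lambda>t. t *\<^sub>R (x - y))) (at 0)"
    by (auto intro!: derivative_eq_intros)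
  ultimately have "(\<phi> has_derivative (\<lambda>t. inner (grad h y) (x - y) * t)) (at 0)"
    unfolding \<phi>_def using has_derivative_compose by (fastforce simp: mult.commute)
  then have "(\<phi> has_field_derivative inner (grad h y) (x - y)) (at 0)"
    by (simp add: has_field_derivative_def)
  from convex_on_imp_above_tangent[OF \<open>convex_on UNIV \<phi>\<close> _ _ _ this, of 1]
  show ?thesis unfolding \<phi>_def bregman_def by simp
qed

lemma L_smooth_bregman_le:
  assumes "L_smooth L h"
  shows "bregman h x y \<le> L / 2 * (norm (x - y))\<^sup>2"
proof -
  have "h x \<le> h y + inner (grad h y) (x - y) + L / 2 * (norm (x - y))\<^sup>2"
    using assms unfolding L_smooth_def by blast
  then show ?thesis unfolding bregman_def by simp
qed

text \<open>Co-coercivity: test the convexity bound at \<open>y\<close> and the smoothness bound at \<open>x\<close> against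
  the point \<open>z = x - (grad h x - grad h y) / L\<close>.\<close>
lemma norm_grad_diff_sq_le_bregman:
  fixes h :: "'a::euclidean_space \<Rightarrow> real"
  assumes cvx: "convex_on UNIV h" and smooth: "L_smooth L h" and L: "L > 0"
  shows "(norm (grad h x - grad h y))\<^sup>2 \<le> 2 * L * bregman h x y"
proof -
  define d where "d = grad h x - grad h y"
  define z where "z = x - (1 / L) *\<^sub>R d"
  have "h differentiable (at y)" using smooth unfolding L_smooth_def by blast
  then have lower: "h y + inner (grad h y) (z - y) \<le> h z"
    using bregman_nonneg[OF cvx, of y z] unfolding bregman_def by simp
  have upper: "h z \<le> h x + inner (grad h x) (z - x) + L / 2 * (norm (z - x))\<^sup>2"
    using smooth unfolding L_smooth_def by blast
  have zx: "z - x = - ((1 / L) *\<^sub>R d)" unfolding z_def by simp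
  have "(norm (z - x))\<^sup>2 = (1 / L)\<^sup>2 * (norm d)\<^sup>2"
    unfolding zx using L by (simp add: power_divide)
  moreover have "inner (grad h x) (z - x) - inner (grad h y) (z - y)
      = inner (grad h y) (y - x) - (1 / L) * (norm d)\<^sup>2"
    unfolding zx d_def z_def
    by (simp add: inner_diff_left inner_diff_right power2_norm_eq_inner algebra_simps)
  moreover have "L / 2 * ((1 / L)\<^sup>2 * (norm d)\<^sup>2) = (1 / (2 * L)) * (norm d)\<^sup>2"
    using L by (simp add: power2_eq_square field_simps)
  ultimately have "(1 / (2 * L)) * (norm d)\<^sup>2 \<le> bregman h x y"
    using lower upper unfolding bregman_def by (simp add: inner_diff_right algebra_simps)
  then show ?thesis
    using L unfolding d_def by (simp add: field_simps)
qed

lemma inner_grad_diff_eq_bregman: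
  "inner (grad h x - grad h y) (x - y) = bregman h x y + bregman h y x"
  unfolding bregman_def by (simp add: inner_diff_left inner_diff_right inner_commute algebra_simps)

lemma abs_inner_grad_le:
  fixes h :: "'a::euclidean_space \<Rightarrow> real"
  assumes cvx: "convex_on UNIV h" and smooth: "L_smooth L h"
  shows "\<bar>inner (grad h x) u\<bar> \<le> \<bar>h (x + u)\<bar> + \<bar>h x\<bar> + L / 2 * (norm u)\<^sup>2"
proof -
  have "h differentiable (at x)" using smooth unfolding L_smooth_def by blast
  then have "0 \<le> bregman h (x + u) x" by (rule bregman_nonneg[OF cvx])
  moreover have "bregman h (x + u) x \<le> L / 2 * (norm u)\<^sup>2"
    using L_smooth_bregman_le[OF smooth, of "x + u" x] by simp
  ultimately show ?thesis unfolding bregman_def by simp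
qed

lemma has_derivative_inner_if_quadratic_bound:
  fixes h :: "'a::real_inner \<Rightarrow> real"
  assumes bound: "\<And>y. \<bar>h y - h x - inner g (y - x)\<bar> \<le> C * (norm (y - x))\<^sup>2"
  shows "(h has_derivative (\<lambda>v. inner g v)) (at x)"
  unfolding has_derivative_at_alt
proof (intro conjI allI impI bounded_linear_inner_right)
  fix e :: real assume e: "e > 0"
  show "\<exists>d>0. \<forall>y. norm (y - x) < d \<longrightarrow> norm (h y - h x - inner g (y - x)) \<le> e * norm (y - x)"
  proof (intro exI[of _ "e / (\<bar>C\<bar> + 1)"] conjI allI impI)
    show "0 < e / (\<bar>C\<bar> + 1)" using e by simp
    fix y assume "norm (y - x) < e / (\<bar>C\<bar> + 1)"
    then have "(\<bar>C\<bar> + 1) * norm (y - x) \<le> e"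
      by (simp add: field_simps)
    then have "(\<bar>C\<bar> + 1) * norm (y - x) * norm (y - x) \<le> e * norm (y - x)"
      by (rule mult_right_mono) simp
    moreover have "C * (norm (y - x))\<^sup>2 \<le> (\<bar>C\<bar> + 1) * norm (y - x) * norm (y - x)"
      using mult_right_mono[of C "\<bar>C\<bar> + 1" "norm (y - x) * norm (y - x)"]
      by (simp add: power2_eq_square mult.assoc)
    ultimately show "norm (h y - h x - inner g (y - x)) \<le> e * norm (y - x)"
      using bound[of y] by simp
  qed
qed

lemma power2_norm_add_le:
  fixes u v :: "'a::real_inner"
  shows "(norm (u + v))\<^sup>2 \<le> 2 * (norm u)\<^sup>2 + 2 * (norm v)\<^sup>2"
proof -
  have "0 \<le> (norm (u - v))\<^sup>2" by simp
  then show ?thesis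
    by (simp add: power2_norm_eq_inner inner_diff_left inner_diff_right inner_add_left
        inner_add_right inner_commute)
qed

lemma power2_norm_diff_scaleR:
  fixes a b :: "'a::real_inner"
  shows "(norm (a - e *\<^sub>R b))\<^sup>2 = (norm a)\<^sup>2 - 2 * e * inner b a + e\<^sup>2 * (norm b)\<^sup>2"
  unfolding power2_norm_eq_inner
  by (simp add: inner_diff_left inner_diff_right inner_commute power2_eq_square algebra_simps)

lemma gradient_step_sq_dist_le:
  fixes h :: "'a::euclidean_space \<Rightarrow> real"
  assumes cvx: "convex_on UNIV h" and smooth: "L_smooth L h" and L: "L > 0"
  shows "(norm ((x - \<eta> *\<^sub>R grad h x) - (y - \<eta> *\<^sub>R c)))\<^sup>2
    \<le> (norm (x - y))\<^sup>2 - 2 * \<eta> * (1 - 2 * L * \<eta>) * bregman h x y - 2 * \<eta> * bregman h y x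
       - 2 * \<eta> * inner (grad h y - c) (x - y) + 2 * \<eta>\<^sup>2 * (norm (grad h y - c))\<^sup>2"
proof -
  have step: "(x - \<eta> *\<^sub>R grad h x) - (y - \<eta> *\<^sub>R c) = (x - y) - \<eta> *\<^sub>R (grad h x - c)"
    by (simp add: algebra_simps)
  have "inner (grad h x - c) (x - y)
      = bregman h x y + bregman h y x + inner (grad h y - c) (x - y)"
    using inner_grad_diff_eq_bregman[of h x y] by (simp add: inner_diff_left)
  then have expand: "(norm ((x - \<eta> *\<^sub>R grad h x) - (y - \<eta> *\<^sub>R c)))\<^sup>2
      = (norm (x - y))\<^sup>2 - 2 * \<eta> * (bregman h x y + bregman h y x + inner (grad h y - c) (x - y))
        + \<eta>\<^sup>2 * (norm (grad h x - c))\<^sup>2"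
    unfolding step power2_norm_diff_scaleR by (simp add: inner_commute)
  have "(norm (grad h x - c))\<^sup>2
      \<le> 4 * L * bregman h x y + 2 * (norm (grad h y - c))\<^sup>2"
    using power2_norm_add_le[of "grad h x - grad h y" "grad h y - c"]
      norm_grad_diff_sq_le_bregman[OF cvx smooth L, of x y]
    by simp
  then have "\<eta>\<^sup>2 * (norm (grad h x - c))\<^sup>2
      \<le> \<eta>\<^sup>2 * (4 * L * bregman h x y + 2 * (norm (grad h y - c))\<^sup>2)"
    by (rule mult_left_mono) simp
  then show ?thesis
    unfolding expand by (simp add: algebra_simps power2_eq_square)
qed

lemma (in prob_space) distr_pair_eq_pair_measure_if_indep_set:
  assumes X: "random_variable S X" and Y: "random_variable T Y"
    and indep: "indep_set {X -` A \<inter> space M | A. A \<in> sets S} {Y -` B \<inter> space M | B. B \<in> sets T}"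
  shows "distr M (S \<Otimes>\<^sub>M T) (\<lambda>\<omega>. (X \<omega>, Y \<omega>)) = distr M S X \<Otimes>\<^sub>M distr M T Y"
proof (rule pair_measure_eqI[symmetric])
  show "sigma_finite_measure (distr M S X)" "sigma_finite_measure (distr M T Y)"
    using prob_space_distr[OF X] prob_space_distr[OF Y]
    by (auto intro: prob_space_imp_sigma_finite)
  have XY: "(\<lambda>\<omega>. (X \<omega>, Y \<omega>)) \<in> measurable M (S \<Otimes>\<^sub>M T)" using X Y by (rule measurable_Pair)
  fix A B assume A: "A \<in> sets (distr M S X)" and B: "B \<in> sets (distr M T Y)"
  have "(\<lambda>\<omega>. (X \<omega>, Y \<omega>)) -` (A \<times> B) \<inter> space M = (X -` A \<inter> space M) \<inter> (Y -` B \<inter> space M)"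
    by auto
  moreover have "prob ((X -` A \<inter> space M) \<inter> (Y -` B \<inter> space M))
      = prob (X -` A \<inter> space M) * prob (Y -` B \<inter> space M)"
    using A B by (intro indep_setD[OF indep]) auto
  ultimately show "emeasure (distr M S X) A * emeasure (distr M T Y) B
      = emeasure (distr M (S \<Otimes>\<^sub>M T) (\<lambda>\<omega>. (X \<omega>, Y \<omega>))) (A \<times> B)"
    using A B X Y XY
    by (simp add: emeasure_distr emeasure_eq_measure measure_nonneg ennreal_mult)
qed simp

text \<open>By independence the joint law of \<open>(X, Y)\<close> is the product of the marginals, so by Tonelli
  the expectation of \<open>k (X, Y)\<close> can be taken over \<open>Y\<close> first, with \<open>X = x\<close> frozen.\<close>
lemma (in prob_space) integral_indep_set_le:
  fixes k :: "'b \<Rightarrow> 'c \<Rightarrow> real" and b :: "'b \<Rightarrow> real"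
  assumes X: "random_variable S X" and Y: "random_variable T Y"
    and indep: "indep_set {X -` A \<inter> space M | A. A \<in> sets S} {Y -` B \<inter> space M | B. B \<in> sets T}"
    and T: "prob_space T" and Y_distr: "distr M T Y = T"
    and k_meas: "(\<lambda>(x, y). k x y) \<in> borel_measurable (S \<Otimes>\<^sub>M T)"
    and k_nonneg: "\<And>x y. 0 \<le> k x y"
    and b_meas: "b \<in> borel_measurable S" and b_int: "integrable M (\<lambda>\<omega>. b (X \<omega>))"
    and k_int: "\<And>x. x \<in> space S \<Longrightarrow> integrable T (\<lambda>y. k x y)"
    and k_le: "\<And>x. x \<in> space S \<Longrightarrow> (\<integral>y. k x y \<partial>T) \<le> b x"
  shows "(\<integral>\<omega>. k (X \<omega>) (Y \<omega>) \<partial>M) \<le> (\<integral>\<omega>. b (X \<omega>) \<partial>M)"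
proof -
  interpret T: prob_space T by (rule T)
  interpret SX: prob_space "distr M S X" by (rule prob_space_distr[OF X])
  have joint: "distr M (S \<Otimes>\<^sub>M T) (\<lambda>\<omega>. (X \<omega>, Y \<omega>)) = distr M S X \<Otimes>\<^sub>M T"
    using distr_pair_eq_pair_measure_if_indep_set[OF X Y indep] Y_distr by simp
  have b_nonneg: "0 \<le> b x" if "x \<in> space S" for x
    using k_le[OF that] Bochner_Integration.integral_nonneg[of T "\<lambda>y. k x y"] k_nonneg
    by fastforce
  have "(\<integral>\<^sup>+\<omega>. k (X \<omega>) (Y \<omega>) \<partial>M) = (\<integral>\<^sup>+(x, y). k x y \<partial>distr M (S \<Otimes>\<^sub>M T) (\<lambda>\<omega>. (X \<omega>, Y \<omega>)))"
    using X Y k_meas by (subst nn_integral_distr) auto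
  also have "\<dots> = (\<integral>\<^sup>+x. \<integral>\<^sup>+y. k x y \<partial>T \<partial>distr M S X)"
    unfolding joint using k_meas by (subst T.nn_integral_fst[symmetric]) auto
  also have "\<dots> \<le> (\<integral>\<^sup>+x. b x \<partial>distr M S X)"
  proof (rule nn_integral_mono)
    fix x assume "x \<in> space (distr M S X)"
    then have x: "x \<in> space S" by simp
    have "(\<integral>\<^sup>+y. k x y \<partial>T) = ennreal (\<integral>y. k x y \<partial>T)"
      using k_int[OF x] k_nonneg by (intro nn_integral_eq_integral) auto
    then show "(\<integral>\<^sup>+y. k x y \<partial>T) \<le> ennreal (b x)"
      using k_le[OF x] by (simp add: ennreal_leI)
  qed
  also have "\<dots> = (\<integral>\<^sup>+\<omega>. b (X \<omega>) \<partial>M)"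
    using X b_meas by (subst nn_integral_distr) auto
  also have "\<dots> = ennreal (\<integral>\<omega>. b (X \<omega>) \<partial>M)"
    using b_int b_nonneg X by (intro nn_integral_eq_integral) (auto simp: measurable_space)
  finally show ?thesis
    using b_nonneg X by (intro integral_real_bounded integral_nonneg_AE)
      (auto simp: measurable_space)
qed

locale stochastic_objective =
  fixes P :: "'s measure" and F :: "'s \<Rightarrow> 'a::euclidean_space \<Rightarrow> real" and f :: "'a \<Rightarrow> real"
    and L :: real
  assumes prob_space_P: "prob_space P"
    and F_meas: "(\<lambda>p. F (fst p) (snd p)) \<in> borel_measurable (P \<Otimes>\<^sub>M borel)"
    and grad_F_meas: "(\<lambda>p. grad (F (fst p)) (snd p)) \<in> borel_measurable (P \<Otimes>\<^sub>M borel)"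
    and F_convex: "AE s in P. convex_on UNIV (F s)"
    and F_smooth: "AE s in P. L_smooth L (F s)"
    and L_pos: "L > 0"
    and F_integrable: "\<And>x. integrable P (\<lambda>s. F s x)"
    and f_eq: "\<And>x. f x = (\<integral>s. F s x \<partial>P)"
begin

sublocale prob_space P by (rule prob_space_P)

abbreviation grad_variance :: "'a \<Rightarrow> real" where
  "grad_variance y \<equiv> \<integral>s. (norm (grad (F s) y - grad f y))\<^sup>2 \<partial>P"

lemma AE_bregman_F_bounds:
  "AE s in P. 0 \<le> bregman (F s) x y \<and> bregman (F s) x y \<le> L / 2 * (norm (x - y))\<^sup>2"
  using F_convex F_smooth
proof eventually_elim
  case (elim s)
  then have "F s differentiable (at y)" unfolding L_smooth_def by blast
  with elim show ?case using bregman_nonneg L_smooth_bregman_le by blast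
qed

lemma measurable_F_at[measurable]: "(\<lambda>s. F s x) \<in> borel_measurable P"
  using measurable_Pair1[OF F_meas] by simp

lemma measurable_grad_F_at[measurable]: "(\<lambda>s. grad (F s) x) \<in> borel_measurable P"
  using measurable_Pair1[OF grad_F_meas] by simp

lemma integrable_grad_F: "integrable P (\<lambda>s. grad (F s) x)"
proof (rule Bochner_Integration.integrable_bound)
  show "integrable P (\<lambda>s. \<Sum>b\<in>Basis. \<bar>F s (x + b)\<bar> + \<bar>F s x\<bar> + L / 2)"
    by (intro Bochner_Integration.integrable_sum Bochner_Integration.integrable_add
        integrable_abs F_integrable integrable_const)
  show "AE s in P. norm (grad (F s) x) \<le> norm (\<Sum>b\<in>Basis. \<bar>F s (x + b)\<bar> + \<bar>F s x\<bar> + L / 2)"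
    using F_convex F_smooth
  proof eventually_elim
    case (elim s)
    have "norm (grad (F s) x) \<le> (\<Sum>b\<in>Basis. \<bar>inner (grad (F s) x) b\<bar>)"
      by (rule norm_le_l1)
    also have "\<dots> \<le> (\<Sum>b\<in>Basis. \<bar>F s (x + b)\<bar> + \<bar>F s x\<bar> + L / 2)"
    proof (rule sum_mono)
      fix b :: 'a assume "b \<in> Basis"
      then show "\<bar>inner (grad (F s) x) b\<bar> \<le> \<bar>F s (x + b)\<bar> + \<bar>F s x\<bar> + L / 2"
        using abs_inner_grad_le[OF elim, of x b] by simp
    qed
    finally show ?case by simp
  qed
qed simp

lemma integrable_bregman_F: "integrable P (\<lambda>s. bregman (F s) x y)"
  unfolding bregman_def
  by (intro Bochner_Integration.integrable_diff F_integrable integrable_inner_left integrable_grad_F)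

lemma integral_bregman_F:
  "(\<integral>s. bregman (F s) x y \<partial>P) = f x - f y - inner (\<integral>s. grad (F s) y \<partial>P) (x - y)"
  using F_integrable integrable_grad_F by (simp add: bregman_def f_eq)

lemma has_derivative_f: "(f has_derivative (\<lambda>v. inner (\<integral>s. grad (F s) x \<partial>P) v)) (at x)"
proof (rule has_derivative_inner_if_quadratic_bound)
  fix y
  have "0 \<le> (\<integral>s. bregman (F s) y x \<partial>P)"
    using AE_bregman_F_bounds by (intro integral_nonneg_AE) (auto elim: eventually_mono)
  moreover have "(\<integral>s. bregman (F s) y x \<partial>P) \<le> (\<integral>s. L / 2 * (norm (y - x))\<^sup>2 \<partial>P)"
    using AE_bregman_F_bounds
    by (intro integral_mono_AE integrable_bregman_F) (auto elim: eventually_mono)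
  ultimately show "\<bar>f y - f x - inner (\<integral>s. grad (F s) x \<partial>P) (y - x)\<bar> \<le> L / 2 * (norm (y - x))\<^sup>2"
    by (simp add: integral_bregman_F prob_space)
qed

lemma grad_f: "grad f x = (\<integral>s. grad (F s) x \<partial>P)"
  by (rule grad_eqI[OF has_derivative_f])

lemma bregman_f_eq_integral: "bregman f x y = (\<integral>s. bregman (F s) x y \<partial>P)"
  unfolding integral_bregman_F by (simp add: bregman_def grad_f)

lemma bregman_f_nonneg: "0 \<le> bregman f x y"
  unfolding bregman_f_eq_integral
  using AE_bregman_F_bounds by (intro integral_nonneg_AE) (auto elim: eventually_mono)

lemma bregman_f_le: "bregman f x y \<le> L / 2 * (norm (x - y))\<^sup>2"
proof -
  have "(\<integral>s. bregman (F s) x y \<partial>P) \<le> (\<integral>s. L / 2 * (norm (x - y))\<^sup>2 \<partial>P)"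
    using AE_bregman_F_bounds
    by (intro integral_mono_AE integrable_bregman_F) (auto elim: eventually_mono)
  then show ?thesis by (simp add: bregman_f_eq_integral prob_space)
qed

lemma measurable_bregman_f[measurable]: "(\<lambda>x. bregman f x y) \<in> borel_measurable borel"
proof -
  have "continuous_on UNIV f"
    using has_derivative_f by (metis continuous_at_imp_continuous_on has_derivative_continuous)
  then have [measurable]: "f \<in> borel_measurable borel" by (rule borel_measurable_continuous_onI)
  show ?thesis unfolding bregman_def by measurable
qed

lemma measurable_gradient_step_sq_dist[measurable]:
  "(\<lambda>(x, s). (norm ((x - \<eta> *\<^sub>R grad (F s) x) - w))\<^sup>2) \<in> borel_measurable (borel \<Otimes>\<^sub>M P)"
proof -
  have [measurable]: "(\<lambda>z. grad (F (snd z)) (fst z)) \<in> borel_measurable (borel \<Otimes>\<^sub>M P)"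
    using measurable_compose[OF measurable_Pair[OF measurable_snd measurable_fst] grad_F_meas]
    by simp
  show ?thesis unfolding case_prod_beta by measurable
qed

lemma integral_gradient_step_sq_dist_le:
  fixes x y :: 'a and \<eta> :: real
  assumes var: "integrable P (\<lambda>s. (norm (grad (F s) y - grad f y))\<^sup>2)"
  defines "k s \<equiv> (norm ((x - \<eta> *\<^sub>R grad (F s) x) - (y - \<eta> *\<^sub>R grad f y)))\<^sup>2"
  shows "integrable P k"
    and "(\<integral>s. k s \<partial>P) \<le> (norm (x - y))\<^sup>2 - 2 * \<eta> * (1 - 2 * L * \<eta>) * bregman f x y
           - 2 * \<eta> * bregman f y x + 2 * \<eta>\<^sup>2 * grad_variance y"
proof -
  define R where "R s = (norm (x - y))\<^sup>2 - 2 * \<eta> * (1 - 2 * L * \<eta>) * bregman (F s) x y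
    - 2 * \<eta> * bregman (F s) y x - 2 * \<eta> * inner (grad (F s) y - grad f y) (x - y)
    + 2 * \<eta>\<^sup>2 * (norm (grad (F s) y - grad f y))\<^sup>2" for s
  have k_le_R: "AE s in P. k s \<le> R s"
    using F_convex F_smooth
    by eventually_elim (simp add: k_def R_def gradient_step_sq_dist_le L_pos)
  have cross_int: "integrable P (\<lambda>s. inner (grad (F s) y - grad f y) (x - y))"
    using integrable_grad_F by auto
  have R_int: "integrable P R"
    unfolding R_def using integrable_bregman_F cross_int var by auto
  have k_meas: "k \<in> borel_measurable P" unfolding k_def by measurable
  show k_int: "integrable P k"
    using k_le_R
    by (intro Bochner_Integration.integrable_bound[OF R_int k_meas])
      (auto simp: k_def elim!: eventually_mono)
  have "(\<integral>s. inner (grad (F s) y - grad f y) (x - y) \<partial>P)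
      = inner (\<integral>s. grad (F s) y - grad f y \<partial>P) (x - y)"
    using integrable_grad_F by (intro integral_inner_left) auto
  also have "\<dots> = 0"
    using integrable_grad_F by (simp add: grad_f prob_space)
  finally have cross: "(\<integral>s. inner (grad (F s) y - grad f y) (x - y) \<partial>P) = 0" .
  have "(\<integral>s. k s \<partial>P) \<le> (\<integral>s. R s \<partial>P)"
    using k_le_R by (intro integral_mono_AE k_int R_int)
  also have "\<dots> = (norm (x - y))\<^sup>2 - 2 * \<eta> * (1 - 2 * L * \<eta>) * bregman f x y
           - 2 * \<eta> * bregman f y x + 2 * \<eta>\<^sup>2 * grad_variance y"
    unfolding R_def using integrable_bregman_F cross_int var
    by (simp add: bregman_f_eq_integral cross prob_space)
  finally show "(\<integral>s. k s \<partial>P) \<le> (norm (x - y))\<^sup>2 - 2 * \<eta> * (1 - 2 * L * \<eta>) * bregman f x y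
           - 2 * \<eta> * bregman f y x + 2 * \<eta>\<^sup>2 * grad_variance y" .
qed

end

locale sgd_step = stochastic_objective P F f L
  for P :: "'s measure" and F :: "'s \<Rightarrow> 'a::euclidean_space \<Rightarrow> real" and f L +
  fixes M :: "'w measure" and X :: "'w \<Rightarrow> 'a" and \<Xi> :: "'w \<Rightarrow> 's"
  assumes prob_space_M: "prob_space M"
    and X_meas: "X \<in> borel_measurable M" and \<Xi>_meas: "\<Xi> \<in> measurable M P"
    and \<Xi>_distr: "distr M P \<Xi> = P"
    and indep: "prob_space.indep_set M
      {X -` A \<inter> space M | A. A \<in> sets borel} {\<Xi> -` B \<inter> space M | B. B \<in> sets P}"
begin

lemma expected_step_sq_dist_le:
  fixes b :: "'a \<Rightarrow> real"
  assumes var: "integrable P (\<lambda>s. (norm (grad (F s) y - grad f y))\<^sup>2)"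
    and b_meas: "b \<in> borel_measurable borel" and b_int: "integrable M (\<lambda>\<omega>. b (X \<omega>))"
    and b_ge: "\<And>x. (norm (x - y))\<^sup>2 - 2 * \<eta> * (1 - 2 * L * \<eta>) * bregman f x y
      - 2 * \<eta> * bregman f y x + 2 * \<eta>\<^sup>2 * grad_variance y \<le> b x"
  shows "(\<integral>\<omega>. (norm ((X \<omega> - \<eta> *\<^sub>R grad (F (\<Xi> \<omega>)) (X \<omega>)) - (y - \<eta> *\<^sub>R grad f y)))\<^sup>2 \<partial>M)
    \<le> (\<integral>\<omega>. b (X \<omega>) \<partial>M)"
proof (rule prob_space.integral_indep_set_le[OF prob_space_M X_meas \<Xi>_meas indep prob_space_P
      \<Xi>_distr _ _ b_meas b_int,
      where k = "\<lambda>x s. (norm ((x - \<eta> *\<^sub>R grad (F s) x) - (y - \<eta> *\<^sub>R grad f y)))\<^sup>2"])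
  fix x
  show "integrable P (\<lambda>s. (norm ((x - \<eta> *\<^sub>R grad (F s) x) - (y - \<eta> *\<^sub>R grad f y)))\<^sup>2)"
    by (rule integral_gradient_step_sq_dist_le(1)[OF var])
  show "(\<integral>s. (norm ((x - \<eta> *\<^sub>R grad (F s) x) - (y - \<eta> *\<^sub>R grad f y)))\<^sup>2 \<partial>P) \<le> b x"
    using integral_gradient_step_sq_dist_le(2)[OF var] b_ge by (rule order_trans)
qed simp_all

lemma expected_step_sq_dist_le_convex:
  assumes \<eta>: "0 < \<eta>" "\<eta> \<le> 1 / (4 * L)"
    and var: "integrable P (\<lambda>s. (norm (grad (F s) y - grad f y))\<^sup>2)"
    and X_int: "integrable M (\<lambda>\<omega>. (norm (X \<omega> - y))\<^sup>2)"
  shows "(\<integral>\<omega>. (norm ((X \<omega> - \<eta> *\<^sub>R grad (F (\<Xi> \<omega>)) (X \<omega>)) - (y - \<eta> *\<^sub>R grad f y)))\<^sup>2 \<partial>M)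
    \<le> (\<integral>\<omega>. (norm (X \<omega> - y))\<^sup>2 \<partial>M) - \<eta> * (\<integral>\<omega>. bregman f (X \<omega>) y \<partial>M)
      + 2 * \<eta>\<^sup>2 * grad_variance y"
proof -
  interpret M: prob_space M by (rule prob_space_M)
  have bregman_int: "integrable M (\<lambda>\<omega>. bregman f (X \<omega>) y)"
  proof (rule Bochner_Integration.integrable_bound)
    show "integrable M (\<lambda>\<omega>. L / 2 * (norm (X \<omega> - y))\<^sup>2)" using X_int by simp
    show "AE \<omega> in M. norm (bregman f (X \<omega>) y) \<le> norm (L / 2 * (norm (X \<omega> - y))\<^sup>2)"
      using bregman_f_nonneg bregman_f_le L_pos by simp
  qed (use X_meas in measurable)
  have "(norm (x - y))\<^sup>2 - 2 * \<eta> * (1 - 2 * L * \<eta>) * bregman f x y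
      - 2 * \<eta> * bregman f y x + 2 * \<eta>\<^sup>2 * grad_variance y
    \<le> (norm (x - y))\<^sup>2 - \<eta> * bregman f x y + 2 * \<eta>\<^sup>2 * grad_variance y" for x
  proof -
    have "\<eta> \<le> 2 * \<eta> * (1 - 2 * L * \<eta>)" using \<eta> L_pos by (simp add: field_simps)
    then have "\<eta> * bregman f x y \<le> 2 * \<eta> * (1 - 2 * L * \<eta>) * bregman f x y"
      using bregman_f_nonneg by (rule mult_right_mono)
    moreover have "0 \<le> \<eta> * bregman f y x" using \<eta> bregman_f_nonneg by simp
    ultimately show ?thesis by simp
  qed
  then have "(\<integral>\<omega>. (norm ((X \<omega> - \<eta> *\<^sub>R grad (F (\<Xi> \<omega>)) (X \<omega>)) - (y - \<eta> *\<^sub>R grad f y)))\<^sup>2 \<partial>M)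
      \<le> (\<integral>\<omega>. (norm (X \<omega> - y))\<^sup>2 - \<eta> * bregman f (X \<omega>) y + 2 * \<eta>\<^sup>2 * grad_variance y \<partial>M)"
    using X_int bregman_int by (intro expected_step_sq_dist_le[OF var]) auto
  also have "\<dots> = (\<integral>\<omega>. (norm (X \<omega> - y))\<^sup>2 \<partial>M) - \<eta> * (\<integral>\<omega>. bregman f (X \<omega>) y \<partial>M)
      + 2 * \<eta>\<^sup>2 * grad_variance y"
    using X_int bregman_int by (simp add: M.prob_space)
  finally show ?thesis .
qed

lemma expected_step_sq_dist_le_strongly_convex:
  assumes sc: "strongly_convex \<mu> f" and var0: "grad_variance y = 0"
    and \<eta>: "0 < \<eta>" "\<eta> \<le> 1 / (2 * L)"
    and var: "integrable P (\<lambda>s. (norm (grad (F s) y - grad f y))\<^sup>2)"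
    and X_int: "integrable M (\<lambda>\<omega>. (norm (X \<omega> - y))\<^sup>2)"
  shows "(\<integral>\<omega>. (norm ((X \<omega> - \<eta> *\<^sub>R grad (F (\<Xi> \<omega>)) (X \<omega>)) - (y - \<eta> *\<^sub>R grad f y)))\<^sup>2 \<partial>M)
    \<le> (1 - \<eta> * \<mu>) * (\<integral>\<omega>. (norm (X \<omega> - y))\<^sup>2 \<partial>M)"
proof -
  have "(\<integral>\<omega>. (norm ((X \<omega> - \<eta> *\<^sub>R grad (F (\<Xi> \<omega>)) (X \<omega>)) - (y - \<eta> *\<^sub>R grad f y)))\<^sup>2 \<partial>M)
      \<le> (\<integral>\<omega>. (1 - \<eta> * \<mu>) * (norm (X \<omega> - y))\<^sup>2 \<partial>M)"
  proof (rule expected_step_sq_dist_le[OF var])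
    fix x
    have "f x + inner (grad f x) (y - x) + \<mu> / 2 * (norm (y - x))\<^sup>2 \<le> f y"
      using sc unfolding strongly_convex_def by blast
    then have "\<mu> / 2 * (norm (x - y))\<^sup>2 \<le> bregman f y x"
      unfolding bregman_def by (simp add: norm_minus_commute)
    then have "\<eta> * \<mu> * (norm (x - y))\<^sup>2 \<le> 2 * \<eta> * bregman f y x"
      using \<eta> by (simp add: mult_left_mono)
    moreover have "0 \<le> 1 - 2 * L * \<eta>" using \<eta> L_pos by (simp add: field_simps)
    then have "0 \<le> 2 * \<eta> * (1 - 2 * L * \<eta>) * bregman f x y"
      using \<eta> bregman_f_nonneg[of x y] by simp
    ultimately show "(norm (x - y))\<^sup>2 - 2 * \<eta> * (1 - 2 * L * \<eta>) * bregman f x y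
        - 2 * \<eta> * bregman f y x + 2 * \<eta>\<^sup>2 * grad_variance y \<le> (1 - \<eta> * \<mu>) * (norm (x - y))\<^sup>2"
      unfolding var0 by (simp add: algebra_simps)
  qed (use X_int in auto)
  then show ?thesis by simp
qed

end

theorem lemma3:
  fixes M :: "'w measure" and P :: "'s measure"
    and F :: "'s \<Rightarrow> 'a::euclidean_space \<Rightarrow> real" and f :: "'a \<Rightarrow> real"
    and \<psi> :: "'a \<Rightarrow> ereal" and xs :: 'a and L :: real and t0 :: nat
  assumes M: "prob_space M" and P: "prob_space P"
    and F_meas: "(\<lambda>p. F (fst p) (snd p)) \<in> borel_measurable (P \<Otimes>\<^sub>M borel)"
    and G_meas: "(\<lambda>p. grad (F (fst p)) (snd p)) \<in> borel_measurable (P \<Otimes>\<^sub>M borel)"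
    and F_convex: "AE s in P. convex_on UNIV (F s)"
    and F_smooth: "AE s in P. L_smooth L (F s)"
    and L_pos: "L > 0"
    and F_int: "\<And>x. integrable P (\<lambda>s. F s x)"
    and f_def: "\<And>x. f x = (\<integral>s. F s x \<partial>P)"
    and f_diff: "f differentiable (at xs)"
    and xs_opt: "\<And>x. ereal (f xs) + \<psi> xs \<le> ereal (f x) + \<psi> x"
    and sigma_fin: "integrable P (\<lambda>s. (norm (grad (F s) xs - grad f xs))\<^sup>2)"
  shows
   "(\<forall>\<eta> (X :: 'w \<Rightarrow> 'a) (\<Xi> :: 'w \<Rightarrow> 's) (t :: nat).
       0 < \<eta> \<and> \<eta> \<le> 1 / (4 * L) \<and> t < t0 \<and>
       X \<in> borel_measurable M \<and> \<Xi> \<in> measurable M P \<and> distr M P \<Xi> = P \<and>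
       prob_space.indep_set M {X -` A \<inter> space M | A. A \<in> sets borel} {\<Xi> -` B \<inter> space M | B. B \<in> sets P} \<and>
       integrable M (\<lambda>\<omega>. (norm (X \<omega> - xs))\<^sup>2)
     \<longrightarrow>
       (\<integral>\<omega>. (norm ((X \<omega> - \<eta> *\<^sub>R grad (F (\<Xi> \<omega>)) (X \<omega>)) - (xs - \<eta> *\<^sub>R grad f xs)))\<^sup>2 \<partial>M)
         + 2 * \<eta>\<^sup>2 * real (t0 - Suc t) * (\<integral>s. (norm (grad (F s) xs - grad f xs))\<^sup>2 \<partial>P)
       \<le> (\<integral>\<omega>. (norm (X \<omega> - xs))\<^sup>2 \<partial>M) - 1 * \<eta> * (\<integral>\<omega>. bregman f (X \<omega>) xs \<partial>M)
         + 2 * \<eta>\<^sup>2 * real (t0 - t) * (\<integral>s. (norm (grad (F s) xs - grad f xs))\<^sup>2 \<partial>P))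
    \<and>
    (\<forall>\<mu>. strongly_convex \<mu> f \<and> (\<integral>s. (norm (grad (F s) xs - grad f xs))\<^sup>2 \<partial>P) = 0 \<longrightarrow>
     (\<forall>\<eta> (X :: 'w \<Rightarrow> 'a) (\<Xi> :: 'w \<Rightarrow> 's).
       0 < \<eta> \<and> \<eta> \<le> 1 / (2 * L) \<and>
       X \<in> borel_measurable M \<and> \<Xi> \<in> measurable M P \<and> distr M P \<Xi> = P \<and>
       prob_space.indep_set M {X -` A \<inter> space M | A. A \<in> sets borel} {\<Xi> -` B \<inter> space M | B. B \<in> sets P} \<and>
       integrable M (\<lambda>\<omega>. (norm (X \<omega> - xs))\<^sup>2)
     \<longrightarrow>
       (\<integral>\<omega>. (norm ((X \<omega> - \<eta> *\<^sub>R grad (F (\<Xi> \<omega>)) (X \<omega>)) - (xs - \<eta> *\<^sub>R grad f xs)))\<^sup>2 \<partial>M)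
       \<le> (1 - 1 * \<eta> * \<mu>) * (\<integral>\<omega>. (norm (X \<omega> - xs))\<^sup>2 \<partial>M)))"
proof -
  interpret stochastic_objective P F f L
    by (rule stochastic_objective.intro[OF P F_meas G_meas F_convex F_smooth L_pos F_int f_def])
  have sgd_step: "sgd_step P F f L M X \<Xi>"
    if "X \<in> borel_measurable M" "\<Xi> \<in> measurable M P" "distr M P \<Xi> = P"
      "prob_space.indep_set M {X -` A \<inter> space M | A. A \<in> sets borel} {\<Xi> -` B \<inter> space M | B. B \<in> sets P}"
    for X :: "'w \<Rightarrow> 'a" and \<Xi> :: "'w \<Rightarrow> 's"
    using that M by (intro sgd_step.intro stochastic_objective_axioms sgd_step_axioms.intro)
  show ?thesis
  proof ((intro conjI allI impI; elim conjE), goal_cases)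
    case (1 \<eta> X \<Xi> t)
    then have "real (t0 - t) = real (t0 - Suc t) + 1" by (simp add: of_nat_diff)
    with sgd_step.expected_step_sq_dist_le_convex[OF sgd_step[OF 1(4-7)] 1(1,2) sigma_fin 1(8)]
    show ?case by (simp add: algebra_simps)
  next
    case (2 \<mu> \<eta> X \<Xi>)
    with sgd_step.expected_step_sq_dist_le_strongly_convex[OF sgd_step[OF 2(5-8)] 2(1-4) sigma_fin 2(9)]
    show ?case by simp
  qed
qed

end
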